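(* Fix $n$, $\alpha$ and $\lambda\in\mathbb{C}$ with $D-\lambda I$ invertible, $\Delta_n(\lambda,\alpha)=0$ and $D_1\Delta_n(\lambda,\alpha)\ne0$. Let $p=(1,(D-\lambda I)^{-1}D\mathbf 1)$ and $$q=(q_*,\tilde q),\qquad q_*=\frac1{D_1\Delta_n(\lambda,\alpha)},\qquad \tilde q=\frac1{D_1\Delta_n(\lambda,\alpha)}(\lambda I-D^T)^{-1}\begin{pmatrix}L(\alpha)\ell_1\\\vdots\\L(\alpha)\ell_n\end{pmatrix}.$$ Then $A_n(\alpha)^Tq=\lambda q$, $q\cdot p=1$, and the spectral projection of $A_n(\alpha)$ onto the eigenspace of $\lambda$ is $(\zeta_0,\zeta)\mapsto D_1\Delta_n(\lambda,\alpha)^{-1}\big(\zeta_0+L(\alpha)P(\lambda I-D)^{-1}\zeta\big)p=(q\cdot(\zeta_0,\zeta))\,p$. If moreover $\alpha\mapsto L(\alpha)$ is differentiable, then $$q\cdot A_n'(\alpha)p=-D_1\Delta_n(\lambda,\alpha)^{-1}D_2\Delta_n(\lambda,\alpha).$$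
   Context: $X=C([-1,0],\mathbb{R})$; $L(\alpha):X\to\mathbb{R}$ is bounded linear, extended complex-linearly. A mesh $-1\le\theta_n<\dots<\theta_1<\theta_0=0$ is given, with Lagrange polynomials $\ell_j(\theta)=\prod_{0\le m\le n,\,m\neq j}\frac{\theta-\theta_m}{\theta_j-\theta_m}$, $j=0,\dots,n$. $D$ is the $n\times n$ matrix with entries $D_{ij}=\ell_j'(\theta_i)$, $i,j=1,\dots,n$; $\mathbf 1=(1,\dots,1)^T\in\mathbb{R}^n$; $I$ identity. For $y\in\mathbb{C}^n$, $Py=\sum_{j=1}^ny_j\ell_j$, $P_0(y_0,y)=y_0\ell_0+Py$. $A_n(\alpha)(y_0,y)=(L(\alpha)P_0(y_0,y),\,Dy-y_0D\mathbf 1)$ on $\mathbb{C}\times\mathbb{C}^n$, $A_n'$ its derivative in $\alpha$. $\pi_n(\lambda)=\ell_0+P(D-\lambda I)^{-1}D\mathbf 1$, $\Delta_n(\lambda,\alpha)=\lambda-L(\alpha)\pi_n(\lambda)$; $D_1,D_2$ are partial derivatives in $\lambda$ and $\alpha$. For $v,w\in\mathbb{C}^m$, $v\cdot w=\sum_iv_iw_i$. *)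

theory Defs
  imports "HOL-Analysis.Analysis" "Jordan_Normal_Form.Gauss_Jordan_Elimination"
begin

text \<open>Elements of X are represented by real functions that are continuous on [-1,0];
  only their values on [-1,0] matter.\<close>

definition contX :: "(real \<Rightarrow> real) \<Rightarrow> bool" where
  "contX f \<longleftrightarrow> continuous_on {-1..0} f"

definition supnorm :: "(real \<Rightarrow> real) \<Rightarrow> real" where
  "supnorm f = (SUP t\<in>{-1..0}. \<bar>f t\<bar>)"

definition bounded_linear_functional :: "((real \<Rightarrow> real) \<Rightarrow> real) \<Rightarrow> bool" where
  "bounded_linear_functional \<Phi> \<longleftrightarrow>
     (\<forall>f g. contX f \<longrightarrow> contX g \<longrightarrow> \<Phi> (\<lambda>t. f t + g t) = \<Phi> f + \<Phi> g) \<and>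
     (\<forall>c f. contX f \<longrightarrow> \<Phi> (\<lambda>t. c * f t) = c * \<Phi> f) \<and>
     (\<exists>C. \<forall>f. contX f \<longrightarrow> \<bar>\<Phi> f\<bar> \<le> C * supnorm f)"

definition opnorm :: "((real \<Rightarrow> real) \<Rightarrow> real) \<Rightarrow> real" where
  "opnorm \<Phi> = (SUP f\<in>{f. contX f \<and> supnorm f \<le> 1}. \<bar>\<Phi> f\<bar>)"

definition functional_differentiable_at ::
  "(real \<Rightarrow> (real \<Rightarrow> real) \<Rightarrow> real) \<Rightarrow> real \<Rightarrow> bool" where
  "functional_differentiable_at L a \<longleftrightarrow>
     (\<exists>L'. bounded_linear_functional L' \<and>
        ((\<lambda>b. opnorm (\<lambda>f. L b f - L a f - (b - a) * L' f) / \<bar>b - a\<bar>) \<longlongrightarrow> 0) (at a))"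

definition cext :: "((real \<Rightarrow> real) \<Rightarrow> real) \<Rightarrow> (real \<Rightarrow> complex) \<Rightarrow> complex" where
  "cext \<Phi> f = complex_of_real (\<Phi> (\<lambda>t. Re (f t))) + \<i> * complex_of_real (\<Phi> (\<lambda>t. Im (f t)))"

definition lag :: "(nat \<Rightarrow> real) \<Rightarrow> nat \<Rightarrow> nat \<Rightarrow> real \<Rightarrow> real" where
  "lag \<theta> n j t = (\<Prod>m\<in>{0..n} - {j}. (t - \<theta> m) / (\<theta> j - \<theta> m))"

text \<open>D (n x n), with JNF index i corresponding to the paper's index i+1.\<close>
definition Dmat :: "(nat \<Rightarrow> real) \<Rightarrow> nat \<Rightarrow> complex mat" where
  "Dmat \<theta> n = mat n n (\<lambda>(i, j). complex_of_real (deriv (lag \<theta> n (j + 1)) (\<theta> (i + 1))))"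

definition onevec :: "nat \<Rightarrow> complex vec" where
  "onevec n = vec n (\<lambda>_. 1)"

definition Pop :: "(nat \<Rightarrow> real) \<Rightarrow> nat \<Rightarrow> complex vec \<Rightarrow> real \<Rightarrow> complex" where
  "Pop \<theta> n y = (\<lambda>t. \<Sum>j<n. y $ j * complex_of_real (lag \<theta> n (j + 1) t))"

definition P0op :: "(nat \<Rightarrow> real) \<Rightarrow> nat \<Rightarrow> complex \<Rightarrow> complex vec \<Rightarrow> real \<Rightarrow> complex" where
  "P0op \<theta> n y0 y = (\<lambda>t. y0 * complex_of_real (lag \<theta> n 0 t) + Pop \<theta> n y t)"

text \<open>Vectors in C x C^n are JNF vectors of dimension n+1; component 0 is the C part,
  component i+1 is the i-th component (paper index i+1) of the C^n part.\<close>
definition headv :: "complex vec \<Rightarrow> complex" where "headv v = v $ 0"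
definition tailv :: "nat \<Rightarrow> complex vec \<Rightarrow> complex vec" where
  "tailv n v = vec n (\<lambda>i. v $ (i + 1))"
definition consv :: "nat \<Rightarrow> complex \<Rightarrow> complex vec \<Rightarrow> complex vec" where
  "consv n y0 y = vec (n + 1) (\<lambda>i. if i = 0 then y0 else y $ (i - 1))"

definition An_map :: "(real \<Rightarrow> (real \<Rightarrow> real) \<Rightarrow> real) \<Rightarrow> (nat \<Rightarrow> real) \<Rightarrow> nat \<Rightarrow> real
    \<Rightarrow> complex vec \<Rightarrow> complex vec" where
  "An_map L \<theta> n a v =
     consv n (cext (L a) (P0op \<theta> n (headv v) (tailv n v)))
       (Dmat \<theta> n *\<^sub>v tailv n v - headv v \<cdot>\<^sub>v (Dmat \<theta> n *\<^sub>v onevec n))"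

definition An :: "(real \<Rightarrow> (real \<Rightarrow> real) \<Rightarrow> real) \<Rightarrow> (nat \<Rightarrow> real) \<Rightarrow> nat \<Rightarrow> real \<Rightarrow> complex mat" where
  "An L \<theta> n a = mat (n + 1) (n + 1) (\<lambda>(i, j). An_map L \<theta> n a (unit_vec (n + 1) j) $ i)"

definition An' :: "(real \<Rightarrow> (real \<Rightarrow> real) \<Rightarrow> real) \<Rightarrow> (nat \<Rightarrow> real) \<Rightarrow> nat \<Rightarrow> real \<Rightarrow> complex mat" where
  "An' L \<theta> n a = mat (n + 1) (n + 1) (\<lambda>(i, j). vector_derivative (\<lambda>b. An L \<theta> n b $$ (i, j)) (at a))"

definition minv :: "complex mat \<Rightarrow> complex mat" where
  "minv A = the (mat_inverse A)"

definition pin :: "(nat \<Rightarrow> real) \<Rightarrow> nat \<Rightarrow> complex \<Rightarrow> real \<Rightarrow> complex" where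
  "pin \<theta> n lam = (\<lambda>t. complex_of_real (lag \<theta> n 0 t)
      + Pop \<theta> n (minv (Dmat \<theta> n - lam \<cdot>\<^sub>m 1\<^sub>m n) *\<^sub>v (Dmat \<theta> n *\<^sub>v onevec n)) t)"

definition Deltan :: "(real \<Rightarrow> (real \<Rightarrow> real) \<Rightarrow> real) \<Rightarrow> (nat \<Rightarrow> real) \<Rightarrow> nat \<Rightarrow> complex \<Rightarrow> real \<Rightarrow> complex" where
  "Deltan L \<theta> n lam a = lam - cext (L a) (pin \<theta> n lam)"

definition D1Delta :: "(real \<Rightarrow> (real \<Rightarrow> real) \<Rightarrow> real) \<Rightarrow> (nat \<Rightarrow> real) \<Rightarrow> nat \<Rightarrow> complex \<Rightarrow> real \<Rightarrow> complex" where
  "D1Delta L \<theta> n lam a = deriv (\<lambda>\<mu>. Deltan L \<theta> n \<mu> a) lam"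

definition D2Delta :: "(real \<Rightarrow> (real \<Rightarrow> real) \<Rightarrow> real) \<Rightarrow> (nat \<Rightarrow> real) \<Rightarrow> nat \<Rightarrow> complex \<Rightarrow> real \<Rightarrow> complex" where
  "D2Delta L \<theta> n lam a = vector_derivative (\<lambda>b. Deltan L \<theta> n lam b) (at a)"

definition spectral_projection :: "complex mat \<Rightarrow> complex \<Rightarrow> complex mat" where
  "spectral_projection A \<mu> = (let N = dim_row A; B = (A - \<mu> \<cdot>\<^sub>m 1\<^sub>m N) ^\<^sub>m N in
     THE P. P \<in> carrier_mat N N \<and> P * P = P \<and>
       (\<forall>v\<in>carrier_vec N. P *\<^sub>v v = v \<longleftrightarrow> B *\<^sub>v v = 0\<^sub>v N) \<and>
       (\<forall>v\<in>carrier_vec N. P *\<^sub>v v = 0\<^sub>v N \<longleftrightarrow> (\<exists>w\<in>carrier_vec N. v = B *\<^sub>v w)))"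

end

theory Submission
  imports Defs "Jordan_Normal_Form.Determinant"
begin

(* A_n(alpha) is a bordered matrix: its first row is (L l_0, L l_1, ..., L l_n) with L = L(alpha),
   and below it the column -D 1 stands next to D. With R(mu) = (D - mu I)^-1 and c = R(lambda) D 1,
   the vector p = (1, c) is a right eigenvector exactly because Delta_n(lambda, alpha) = 0; the
   transposed computation, with (lambda I - D^T)^-1 in place of R(lambda), shows that q is a left
   eigenvector.
   The resolvent identity R(mu) - R(lambda) = (mu - lambda) R(mu) R(lambda), together with the
   continuity of R given by Cramer's rule, yields R'(lambda) = R(lambda)^2 and hence
   D_1 Delta_n = 1 - (R(lambda) c) . (L l_j)_j, which is exactly the normalisation q . p = 1.
   As D - lambda I is invertible, the eigenspace of lambda is spanned by p, and A_n - lambda maps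
   the hyperplane {v. q . v = 0} onto itself; so every power of A_n - lambda has kernel span p and
   range {v. q . v = 0}, and the spectral projection is the rank-one matrix p q^T.
   Only the first row of A_n depends on alpha, and q . A_n' p pairs its derivative with p in the
   same way as D_2 Delta_n does. *)

section \<open>Bounded functionals on the state space\<close>

lemma contX_Re: "continuous_on {-1..0} f \<Longrightarrow> contX (\<lambda>t. Re (f t))"
  and contX_Im: "continuous_on {-1..0} f \<Longrightarrow> contX (\<lambda>t. Im (f t))"
  unfolding contX_def by (auto intro!: continuous_intros)

lemma contX_cmult: "contX f \<Longrightarrow> contX (\<lambda>t. c * f t)"
  unfolding contX_def by (intro continuous_intros)

lemma blf_add: "bounded_linear_functional \<Phi> \<Longrightarrow> contX f \<Longrightarrow> contX g \<Longrightarrow> \<Phi> (\<lambda>t. f t + g t) = \<Phi> f + \<Phi> g"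
  and blf_cmult: "bounded_linear_functional \<Phi> \<Longrightarrow> contX f \<Longrightarrow> \<Phi> (\<lambda>t. c * f t) = c * \<Phi> f"
  unfolding bounded_linear_functional_def by blast+

lemma blf_lincomb:
  assumes "bounded_linear_functional \<Phi>" "contX f" "contX g"
  shows "\<Phi> (\<lambda>t. a * f t + b * g t) = a * \<Phi> f + b * \<Phi> g"
  using blf_add[OF assms(1) contX_cmult[OF assms(2)] contX_cmult[OF assms(3)]]
    blf_cmult[OF assms(1,2)] blf_cmult[OF assms(1,3)] by simp

lemma blf_diff_cmult:
  assumes \<Phi>1: "bounded_linear_functional \<Phi>1" and \<Phi>2: "bounded_linear_functional \<Phi>2"
    and \<Phi>3: "bounded_linear_functional \<Phi>3"
  shows "bounded_linear_functional (\<lambda>f. \<Phi>1 f - \<Phi>2 f - c * \<Phi>3 f)"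
proof -
  obtain C1 C2 C3 where C: "\<And>f. contX f \<Longrightarrow> \<bar>\<Phi>1 f\<bar> \<le> C1 * supnorm f"
    "\<And>f. contX f \<Longrightarrow> \<bar>\<Phi>2 f\<bar> \<le> C2 * supnorm f" "\<And>f. contX f \<Longrightarrow> \<bar>\<Phi>3 f\<bar> \<le> C3 * supnorm f"
    using assms unfolding bounded_linear_functional_def by metis
  have "\<bar>\<Phi>1 f - \<Phi>2 f - c * \<Phi>3 f\<bar> \<le> (C1 + C2 + \<bar>c\<bar> * C3) * supnorm f" if "contX f" for f
  proof -
    have "\<bar>c * \<Phi>3 f\<bar> \<le> \<bar>c\<bar> * (C3 * supnorm f)"
      unfolding abs_mult by (intro mult_left_mono C that) simp
    then show ?thesis using C(1,2)[OF that] by (simp add: algebra_simps abs_le_iff)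
  qed
  moreover have "\<Phi>1 (\<lambda>t. f t + g t) - \<Phi>2 (\<lambda>t. f t + g t) - c * \<Phi>3 (\<lambda>t. f t + g t)
      = (\<Phi>1 f - \<Phi>2 f - c * \<Phi>3 f) + (\<Phi>1 g - \<Phi>2 g - c * \<Phi>3 g)" if "contX f" "contX g" for f g
    using blf_add[OF \<Phi>1 that] blf_add[OF \<Phi>2 that] blf_add[OF \<Phi>3 that]
    by (simp add: algebra_simps)
  moreover have "\<Phi>1 (\<lambda>t. d * f t) - \<Phi>2 (\<lambda>t. d * f t) - c * \<Phi>3 (\<lambda>t. d * f t)
      = d * (\<Phi>1 f - \<Phi>2 f - c * \<Phi>3 f)" if "contX f" for d f
    using blf_cmult[OF \<Phi>1 that] blf_cmult[OF \<Phi>2 that] blf_cmult[OF \<Phi>3 that]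
    by (simp add: algebra_simps)
  ultimately show ?thesis
    unfolding bounded_linear_functional_def by blast
qed

lemma supnorm_ge:
  assumes "contX g" "t \<in> {-1..0}"
  shows "\<bar>g t\<bar> \<le> supnorm g"
proof -
  have "compact ((\<lambda>t. \<bar>g t\<bar>) ` {-1..(0::real)})"
    using assms(1) unfolding contX_def by (intro compact_continuous_image continuous_intros) auto
  then show ?thesis
    unfolding supnorm_def using assms(2)
    by (intro cSUP_upper bounded_imp_bdd_above compact_imp_bounded)
qed

lemma supnorm_nonneg: "contX g \<Longrightarrow> 0 \<le> supnorm g"
  using supnorm_ge[of g 0] by fastforce

lemma blf_abs_le_opnorm:
  assumes \<Phi>: "bounded_linear_functional \<Phi>" and g: "contX g"
  shows "\<bar>\<Phi> g\<bar> \<le> opnorm \<Phi> * supnorm g"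
proof -
  obtain C where C: "\<And>f. contX f \<Longrightarrow> \<bar>\<Phi> f\<bar> \<le> C * supnorm f"
    using \<Phi> unfolding bounded_linear_functional_def by blast
  have bdd: "bdd_above ((\<lambda>f. \<bar>\<Phi> f\<bar>) ` {f. contX f \<and> supnorm f \<le> 1})"
  proof (rule bdd_aboveI2)
    fix f assume f: "f \<in> {f. contX f \<and> supnorm f \<le> 1}"
    then have "C * supnorm f \<le> \<bar>C\<bar> * 1"
      using supnorm_nonneg[of f] abs_ge_self[of C] by (intro mult_mono) auto
    then show "\<bar>\<Phi> f\<bar> \<le> \<bar>C\<bar>" using C f by fastforce
  qed
  show ?thesis
  proof (cases "supnorm g = 0")
    case True
    then show ?thesis using C[OF g] by simp
  next
    case False
    define s where "s = supnorm g"
    have s: "s > 0" using False supnorm_nonneg[OF g] unfolding s_def by linarith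
    have "supnorm (\<lambda>t. (1/s) * g t) \<le> 1"
      unfolding supnorm_def
      using s supnorm_ge[OF g] by (intro cSUP_least) (auto simp: abs_mult s_def divide_le_eq_1)
    then have "\<bar>\<Phi> (\<lambda>t. (1/s) * g t)\<bar> \<le> opnorm \<Phi>"
      unfolding opnorm_def using contX_cmult[OF g, of "1/s"] by (intro cSUP_upper[OF _ bdd]) auto
    moreover have "\<Phi> (\<lambda>t. (1/s) * g t) = (1/s) * \<Phi> g"
      by (rule blf_cmult[OF \<Phi> g])
    ultimately show ?thesis
      using s by (simp add: abs_mult s_def[symmetric] divide_le_eq mult.commute)
  qed
qed

lemma functional_differentiable_at_has_real_derivative:
  assumes L: "\<forall>b. bounded_linear_functional (L b)" and diff: "functional_differentiable_at L a"
  obtains L' where "bounded_linear_functional L'"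
    "\<And>g. contX g \<Longrightarrow> ((\<lambda>b. L b g) has_real_derivative L' g) (at a)"
proof -
  obtain L' where L': "bounded_linear_functional L'"
    and lim: "((\<lambda>b. opnorm (\<lambda>f. L b f - L a f - (b - a) * L' f) / \<bar>b - a\<bar>) \<longlongrightarrow> 0) (at a)"
    using diff unfolding functional_differentiable_at_def by blast
  have "((\<lambda>b. L b g) has_real_derivative L' g) (at a)" if g: "contX g" for g
  proof -
    have "\<bar>(L b g - L a g) / (b - a) - L' g\<bar>
        \<le> opnorm (\<lambda>f. L b f - L a f - (b - a) * L' f) / \<bar>b - a\<bar> * supnorm g" if "b \<noteq> a" for b
    proof -
      have "(L b g - L a g) / (b - a) - L' g = (L b g - L a g - (b - a) * L' g) / (b - a)"
        using that by (simp add: field_simps)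
      then show ?thesis
        using blf_abs_le_opnorm[OF blf_diff_cmult[OF spec[OF L, of b] spec[OF L, of a] L'] g,
            of "b - a"]
        by (simp add: divide_right_mono)
    qed
    then have "\<forall>\<^sub>F b in at a. norm ((L b g - L a g) / (b - a) - L' g)
        \<le> opnorm (\<lambda>f. L b f - L a f - (b - a) * L' f) / \<bar>b - a\<bar> * supnorm g"
      unfolding eventually_at_filter by (intro always_eventually) auto
    then have "((\<lambda>b. (L b g - L a g) / (b - a) - L' g) \<longlongrightarrow> 0) (at a)"
      by (rule Lim_null_comparison[OF _ tendsto_mult_left_zero[OF lim]])
    then show ?thesis
      unfolding has_field_derivative_iff by (simp add: LIM_zero_iff)
  qed
  then show thesis using L' that by blast
qed

lemma cext_add:
  assumes "bounded_linear_functional \<Phi>" "continuous_on {-1..0} f" "continuous_on {-1..0} g"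
  shows "cext \<Phi> (\<lambda>t. f t + g t) = cext \<Phi> f + cext \<Phi> g"
  using blf_add[OF assms(1) contX_Re[OF assms(2)] contX_Re[OF assms(3)]]
    blf_add[OF assms(1) contX_Im[OF assms(2)] contX_Im[OF assms(3)]]
  unfolding cext_def by (simp add: algebra_simps)

lemma cext_cmult:
  assumes \<Phi>: "bounded_linear_functional \<Phi>" and f: "continuous_on {-1..0} f"
  shows "cext \<Phi> (\<lambda>t. z * f t) = z * cext \<Phi> f"
proof -
  have "\<Phi> (\<lambda>t. Re (z * f t)) = Re z * \<Phi> (\<lambda>t. Re (f t)) + (- Im z) * \<Phi> (\<lambda>t. Im (f t))"
    using blf_lincomb[OF \<Phi> contX_Re[OF f] contX_Im[OF f], of "Re z" "- Im z"] by simp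
  moreover have "\<Phi> (\<lambda>t. Im (z * f t)) = Re z * \<Phi> (\<lambda>t. Im (f t)) + Im z * \<Phi> (\<lambda>t. Re (f t))"
    using blf_lincomb[OF \<Phi> contX_Re[OF f] contX_Im[OF f], of "Im z" "Re z"] by (simp add: ac_simps)
  ultimately show ?thesis
    unfolding cext_def by (simp add: complex_eq_iff algebra_simps)
qed

lemma cext_sum:
  assumes \<Phi>: "bounded_linear_functional \<Phi>" and "\<And>j. j \<in> S \<Longrightarrow> continuous_on {-1..0} (f j)"
  shows "cext \<Phi> (\<lambda>t. \<Sum>j\<in>S. f j t) = (\<Sum>j\<in>S. cext \<Phi> (f j))"
  using assms(2)
proof (induction S rule: infinite_finite_induct)
  case (infinite S)
  then show ?case using cext_cmult[OF \<Phi>, of "\<lambda>_. 0" 0] by simp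
next
  case empty
  then show ?case using cext_cmult[OF \<Phi>, of "\<lambda>_. 0" 0] by simp
next
  case (insert x F)
  then have "cext \<Phi> (\<lambda>t. f x t + (\<Sum>j\<in>F. f j t)) = cext \<Phi> (f x) + cext \<Phi> (\<lambda>t. \<Sum>j\<in>F. f j t)"
    using \<Phi> by (intro cext_add) (auto intro!: continuous_intros)
  then show ?case using insert by simp
qed

lemma cext_has_vector_derivative:
  assumes "\<And>g. contX g \<Longrightarrow> ((\<lambda>b. L b g) has_real_derivative L' g) (at a)"
    and f: "continuous_on {-1..0} f"
  shows "((\<lambda>b. cext (L b) f) has_vector_derivative cext L' f) (at a)"
proof -
  have "((\<lambda>b. complex_of_real (L b g)) has_vector_derivative complex_of_real (L' g)) (at a)"
    if "contX g" for g
    using assms(1)[OF that] unfolding has_real_derivative_iff_has_vector_derivative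
    by (rule bounded_linear.has_vector_derivative[OF bounded_linear_of_real])
  then show ?thesis
    unfolding cext_def
    using contX_Re[OF f] contX_Im[OF f]
    by (intro has_vector_derivative_add has_vector_derivative_mult_right) blast+
qed

section \<open>Matrices and the resolvent\<close>

lemma eq_mat_mult_vecI:
  fixes A B :: "'a::comm_ring_1 mat"
  assumes A: "A \<in> carrier_mat n m" and B: "B \<in> carrier_mat n m"
    and eq: "\<And>v. v \<in> carrier_vec m \<Longrightarrow> A *\<^sub>v v = B *\<^sub>v v"
  shows "A = B"
proof (rule eq_matI)
  fix i j assume "i < dim_row B" "j < dim_col B"
  then show "A $$ (i, j) = B $$ (i, j)"
    using eq[of "unit_vec m j"] A B by (metis carrier_matD index_mult_mat_vec unit_vec_carrier
        scalar_prod_right_unit row_carrier index_row(1))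
qed (use A B in auto)

lemma minus_vec_eq_zero_iff:
  fixes u w :: "'a::ab_group_add vec"
  assumes "u \<in> carrier_vec n" "w \<in> carrier_vec n"
  shows "u - w = 0\<^sub>v n \<longleftrightarrow> u = w"
proof
  assume "u - w = 0\<^sub>v n"
  then have "(u - w) $ i = 0" if "i < n" for i
    using that by simp
  then show "u = w" using assms by (intro eq_vecI) auto
qed (use assms in auto)

lemma smult_mat_mult_vec:
  fixes A :: "'a::comm_ring_1 mat"
  assumes "A \<in> carrier_mat n m" "v \<in> carrier_vec m"
  shows "(k \<cdot>\<^sub>m A) *\<^sub>v v = k \<cdot>\<^sub>v (A *\<^sub>v v)"
  using assms by (intro eq_vecI) (auto simp: scalar_prod_def sum_distrib_left ac_simps)

lemma shifted_mult_vec: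
  fixes A :: "'a::comm_ring_1 mat"
  assumes "A \<in> carrier_mat n n" "v \<in> carrier_vec n"
  shows "(A - \<mu> \<cdot>\<^sub>m 1\<^sub>m n) *\<^sub>v v = A *\<^sub>v v - \<mu> \<cdot>\<^sub>v v"
proof (rule eq_vecI)
  fix i assume "i < dim_vec (A *\<^sub>v v - \<mu> \<cdot>\<^sub>v v)"
  then have i: "i < n" using assms by simp
  have "(\<Sum>k = 0..<n. (A $$ (i, k) - \<mu> * (if i = k then 1 else 0)) * v $ k)
      = (\<Sum>k = 0..<n. A $$ (i, k) * v $ k - (if k = i then \<mu> * v $ k else 0))"
    by (intro sum.cong) (auto simp: algebra_simps)
  also have "\<dots> = (\<Sum>k = 0..<n. A $$ (i, k) * v $ k) - \<mu> * v $ i"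
    using i by (simp add: sum_subtractf)
  finally show "((A - \<mu> \<cdot>\<^sub>m 1\<^sub>m n) *\<^sub>v v) $ i = (A *\<^sub>v v - \<mu> \<cdot>\<^sub>v v) $ i"
    using assms i by (simp add: scalar_prod_def row_def)
qed (use assms in simp)

lemma shifted_neg_mult_vec:
  fixes A :: "'a::comm_ring_1 mat"
  assumes A: "A \<in> carrier_mat n n" and v: "v \<in> carrier_vec n"
  shows "(\<mu> \<cdot>\<^sub>m 1\<^sub>m n - A) *\<^sub>v v = \<mu> \<cdot>\<^sub>v v - A *\<^sub>v v"
proof -
  have "\<mu> \<cdot>\<^sub>m 1\<^sub>m n - A = (-1) \<cdot>\<^sub>m (A - \<mu> \<cdot>\<^sub>m 1\<^sub>m n)"
    using A by (intro eq_matI) auto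
  moreover have "A - \<mu> \<cdot>\<^sub>m 1\<^sub>m n \<in> carrier_mat n n"
    using A by (intro minus_carrier_mat smult_carrier_mat one_carrier_mat)
  ultimately have "(\<mu> \<cdot>\<^sub>m 1\<^sub>m n - A) *\<^sub>v v = (-1) \<cdot>\<^sub>v (A *\<^sub>v v - \<mu> \<cdot>\<^sub>v v)"
    using smult_mat_mult_vec[OF _ v] shifted_mult_vec[OF A v] by metis
  then show ?thesis
    using A v by (auto intro!: eq_vecI)
qed

lemma pow_mat_Suc_mult_vec:
  fixes X :: "'a::comm_ring_1 mat"
  assumes "X \<in> carrier_mat N N" "v \<in> carrier_vec N"
  shows "(X ^\<^sub>m Suc k) *\<^sub>v v = (X ^\<^sub>m k) *\<^sub>v (X *\<^sub>v v)"
  using assms by (simp add: assoc_mult_mat_vec[of _ N N _ N])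

lemma invertible_mat_det_nonzero:
  fixes A :: "'a::comm_ring_1 mat"
  assumes A: "A \<in> carrier_mat n n" and inv: "invertible_mat A"
  shows "det A \<noteq> 0"
proof -
  obtain B where AB: "A * B = 1\<^sub>m n" and BA: "B * A = 1\<^sub>m (dim_row B)"
    using inv A unfolding invertible_mat_def inverts_mat_def by auto
  have "B \<in> carrier_mat n n"
    using arg_cong[OF AB, of dim_col] arg_cong[OF BA, of dim_col] A by auto
  then have "det A * det B = 1"
    using AB A by (simp flip: det_mult)
  then show ?thesis by auto
qed

lemma minv_eq_adj:
  fixes A :: "complex mat"
  assumes A: "A \<in> carrier_mat n n" and det: "det A \<noteq> 0"
  shows "minv A = (1 / det A) \<cdot>\<^sub>m adj_mat A"
proof -
  have "mat_inverse A \<noteq> None"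
    using mat_inverse(1)[OF A, where b = "()"] det_non_zero_imp_unit[OF A det, of "()"] by blast
  then obtain B where B: "mat_inverse A = Some B" by blast
  then have BA: "B * A = 1\<^sub>m n" and Bc: "B \<in> carrier_mat n n"
    using mat_inverse(2)[OF A] by blast+
  define K where "K = (1 / det A) \<cdot>\<^sub>m adj_mat A"
  have Kc: "K \<in> carrier_mat n n" using adj_mat(1)[OF A] by (simp add: K_def)
  have "A * K = (1 / det A) \<cdot>\<^sub>m (det A \<cdot>\<^sub>m 1\<^sub>m n)"
    using adj_mat(1,2)[OF A] A by (simp add: K_def mult_smult_distrib)
  also have "\<dots> = 1\<^sub>m n"
    using det by (intro eq_matI) auto
  finally have "B = (B * A) * K"
    using A Bc Kc by simp
  then have "B = K" using BA Kc by simp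
  then show ?thesis using B by (simp add: minv_def K_def)
qed

lemma minv:
  fixes A :: "complex mat"
  assumes A: "A \<in> carrier_mat n n" and det: "det A \<noteq> 0"
  shows "minv A \<in> carrier_mat n n" "A * minv A = 1\<^sub>m n" "minv A * A = 1\<^sub>m n"
proof -
  have "(1 / det A) \<cdot>\<^sub>m (det A \<cdot>\<^sub>m 1\<^sub>m n) = 1\<^sub>m n"
    using det by (intro eq_matI) auto
  then show "minv A \<in> carrier_mat n n" "A * minv A = 1\<^sub>m n" "minv A * A = 1\<^sub>m n"
    using adj_mat[OF A] A
    by (auto simp: minv_eq_adj[OF A det] mult_smult_distrib mult_smult_assoc_mat)
qed

lemma minv_mult_vec_cancel:
  fixes A :: "complex mat"
  assumes A: "A \<in> carrier_mat n n" and det: "det A \<noteq> 0" and u: "u \<in> carrier_vec n"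
  shows "A *\<^sub>v (minv A *\<^sub>v u) = u" "minv A *\<^sub>v (A *\<^sub>v u) = u"
  using minv[OF A det] A u by (auto simp flip: assoc_mult_mat_vec)

lemma continuous_on_det:
  fixes X :: "'a::topological_space \<Rightarrow> complex mat"
  assumes X: "\<And>\<mu>. X \<mu> \<in> carrier_mat m m"
    and cont: "\<And>i j. i < m \<Longrightarrow> j < m \<Longrightarrow> continuous_on S (\<lambda>\<mu>. X \<mu> $$ (i, j))"
  shows "continuous_on S (\<lambda>\<mu>. det (X \<mu>))"
proof -
  have "continuous_on S (\<lambda>\<mu>. X \<mu> $$ (i, p i))" if "p permutes {0..<m}" "i \<in> {0..<m}" for p i
    using that permutes_in_image[OF that(1)] by (intro cont) auto
  then show ?thesis
    unfolding det_def'[OF X] by (intro continuous_intros) auto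
qed

lemma continuous_on_adj_mat_index:
  fixes X :: "'a::topological_space \<Rightarrow> complex mat"
  assumes X: "\<And>\<mu>. X \<mu> \<in> carrier_mat m m"
    and cont: "\<And>i j. i < m \<Longrightarrow> j < m \<Longrightarrow> continuous_on S (\<lambda>\<mu>. X \<mu> $$ (i, j))"
    and "j < m" "k < m"
  shows "continuous_on S (\<lambda>\<mu>. adj_mat (X \<mu>) $$ (j, k))"
proof -
  have "continuous_on S (\<lambda>\<mu>. mat_delete (X \<mu>) k j $$ (a, b))" if "a < m - 1" "b < m - 1" for a b
  proof -
    have "mat_delete (X \<mu>) k j $$ (a, b)
        = X \<mu> $$ (if a < k then a else Suc a, if b < j then b else Suc b)" for \<mu>
      using that X[of \<mu>] by (simp add: mat_delete_def)
    moreover have "(if a < k then a else Suc a) < m" "(if b < j then b else Suc b) < m"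
      using that by auto
    ultimately show ?thesis by (simp only: cont)
  qed
  then have "continuous_on S (\<lambda>\<mu>. det (mat_delete (X \<mu>) k j))"
    by (rule continuous_on_det[where m = "m - 1", OF mat_delete_carrier[OF X]])
  moreover have "adj_mat (X \<mu>) $$ (j, k) = (-1) ^ (k + j) * det (mat_delete (X \<mu>) k j)" for \<mu>
    using assms(3,4) X[of \<mu>] by (simp add: adj_mat_def cofactor_def)
  ultimately show ?thesis
    by (simp add: continuous_on_mult_left)
qed

lemma continuous_on_det_shifted:
  fixes A :: "complex mat"
  assumes A: "A \<in> carrier_mat n n"
  shows "continuous_on UNIV (\<lambda>\<mu>. det (A - \<mu> \<cdot>\<^sub>m 1\<^sub>m n))"
    and "i < n \<Longrightarrow> k < n \<Longrightarrow> continuous_on UNIV (\<lambda>\<mu>. adj_mat (A - \<mu> \<cdot>\<^sub>m 1\<^sub>m n) $$ (i, k))"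
proof -
  have E: "A - \<mu> \<cdot>\<^sub>m 1\<^sub>m n \<in> carrier_mat n n" for \<mu>
    using A by (intro minus_carrier_mat smult_carrier_mat one_carrier_mat)
  have Econt: "continuous_on UNIV (\<lambda>\<mu>. (A - \<mu> \<cdot>\<^sub>m 1\<^sub>m n) $$ (i, k))" if "i < n" "k < n" for i k
    using that A by (simp add: continuous_intros)
  show "continuous_on UNIV (\<lambda>\<mu>. det (A - \<mu> \<cdot>\<^sub>m 1\<^sub>m n))"
    by (rule continuous_on_det[OF E Econt])
  show "i < n \<Longrightarrow> k < n \<Longrightarrow> continuous_on UNIV (\<lambda>\<mu>. adj_mat (A - \<mu> \<cdot>\<^sub>m 1\<^sub>m n) $$ (i, k))"
    by (rule continuous_on_adj_mat_index[OF E Econt])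
qed

lemma isCont_resolvent:
  fixes A :: "complex mat"
  assumes A: "A \<in> carrier_mat n n" and v: "v \<in> carrier_vec n"
    and det: "det (A - lam \<cdot>\<^sub>m 1\<^sub>m n) \<noteq> 0" and j: "j < n"
  shows "isCont (\<lambda>\<mu>. (minv (A - \<mu> \<cdot>\<^sub>m 1\<^sub>m n) *\<^sub>v v) $ j) lam"
proof -
  define E where "E \<mu> = A - \<mu> \<cdot>\<^sub>m 1\<^sub>m n" for \<mu>
  define S where "S = {\<mu>. det (E \<mu>) \<noteq> 0}"
  have E: "E \<mu> \<in> carrier_mat n n" for \<mu>
    using A unfolding E_def by (intro minus_carrier_mat smult_carrier_mat one_carrier_mat)
  note cont = continuous_on_det_shifted[OF A, folded E_def]
  have "open S"
    unfolding S_def by (intro open_Collect_neq cont continuous_on_const)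
  moreover have "lam \<in> S" using det by (simp add: S_def E_def)
  moreover have "continuous_on S (\<lambda>\<mu>. (minv (E \<mu>) *\<^sub>v v) $ j)"
  proof (rule continuous_on_eq)
    have "continuous_on S (\<lambda>\<mu>. det (E \<mu>))"
      using cont(1) by (rule continuous_on_subset[OF _ subset_UNIV])
    moreover have "continuous_on S (\<lambda>\<mu>. adj_mat (E \<mu>) $$ (j, k))" if "k < n" for k
      using cont(2)[OF j that] by (rule continuous_on_subset[OF _ subset_UNIV])
    ultimately show
      "continuous_on S (\<lambda>\<mu>. (1 / det (E \<mu>)) * (\<Sum>k<n. adj_mat (E \<mu>) $$ (j, k) * v $ k))"
      by (intro continuous_intros) (auto simp: S_def)
    show "(1 / det (E \<mu>)) * (\<Sum>k<n. adj_mat (E \<mu>) $$ (j, k) * v $ k) = (minv (E \<mu>) *\<^sub>v v) $ j"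
      if "\<mu> \<in> S" for \<mu>
      using that j v carrier_matD[OF adj_mat(1)[OF E]]
      by (simp add: S_def minv_eq_adj[OF E] scalar_prod_def row_def lessThan_atLeast0
          sum_distrib_left)
  qed
  ultimately show ?thesis
    unfolding E_def by (simp add: continuous_on_eq_continuous_at)
qed

lemma resolvent_identity:
  fixes A :: "complex mat"
  assumes A: "A \<in> carrier_mat n n" and b: "b \<in> carrier_vec n"
    and det\<mu>: "det (A - \<mu> \<cdot>\<^sub>m 1\<^sub>m n) \<noteq> 0" and det: "det (A - lam \<cdot>\<^sub>m 1\<^sub>m n) \<noteq> 0"
  shows "minv (A - \<mu> \<cdot>\<^sub>m 1\<^sub>m n) *\<^sub>v b - minv (A - lam \<cdot>\<^sub>m 1\<^sub>m n) *\<^sub>v b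
    = (\<mu> - lam) \<cdot>\<^sub>v (minv (A - \<mu> \<cdot>\<^sub>m 1\<^sub>m n) *\<^sub>v (minv (A - lam \<cdot>\<^sub>m 1\<^sub>m n) *\<^sub>v b))"
proof -
  define R where "R z = minv (A - z \<cdot>\<^sub>m 1\<^sub>m n)" for z
  have E: "A - z \<cdot>\<^sub>m 1\<^sub>m n \<in> carrier_mat n n" for z
    using A by (intro minus_carrier_mat smult_carrier_mat one_carrier_mat)
  have R\<mu>: "R \<mu> \<in> carrier_mat n n"
    unfolding R_def by (rule minv(1)[OF E det\<mu>])
  define x where "x = R lam *\<^sub>v b"
  have x: "x \<in> carrier_vec n"
    using minv(1)[OF E det] b by (simp add: x_def R_def)
  have "(A - lam \<cdot>\<^sub>m 1\<^sub>m n) *\<^sub>v x = b"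
    unfolding x_def R_def by (rule minv_mult_vec_cancel(1)[OF E det b])
  then have "(A - \<mu> \<cdot>\<^sub>m 1\<^sub>m n) *\<^sub>v x = b + (lam - \<mu>) \<cdot>\<^sub>v x"
    using A x b unfolding shifted_mult_vec[OF A x] by (auto simp: algebra_simps)
  then have x_eq: "x = R \<mu> *\<^sub>v b + (lam - \<mu>) \<cdot>\<^sub>v (R \<mu> *\<^sub>v x)"
    using minv_mult_vec_cancel(2)[OF E det\<mu> x] R\<mu> b x
    by (simp add: R_def mult_add_distrib_mat_vec mult_mat_vec)
  show ?thesis
    unfolding R_def[symmetric] x_def[symmetric]
  proof (rule eq_vecI)
    fix i assume "i < dim_vec ((\<mu> - lam) \<cdot>\<^sub>v (R \<mu> *\<^sub>v x))"
    then have i: "i < n" using R\<mu> by simp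
    have "x $ i = (R \<mu> *\<^sub>v b) $ i + (lam - \<mu>) * (R \<mu> *\<^sub>v x) $ i"
      using arg_cong[OF x_eq, of "\<lambda>v. v $ i"] i R\<mu> by simp
    then show "(R \<mu> *\<^sub>v b - x) $ i = ((\<mu> - lam) \<cdot>\<^sub>v (R \<mu> *\<^sub>v x)) $ i"
      using i R\<mu> x by (simp add: algebra_simps)
  qed (use R\<mu> x in simp)
qed

lemma resolvent_has_field_derivative:
  fixes A :: "complex mat"
  assumes A: "A \<in> carrier_mat n n" and b: "b \<in> carrier_vec n"
    and det: "det (A - lam \<cdot>\<^sub>m 1\<^sub>m n) \<noteq> 0" and j: "j < n"
  shows "((\<lambda>\<mu>. (minv (A - \<mu> \<cdot>\<^sub>m 1\<^sub>m n) *\<^sub>v b) $ j) has_field_derivative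
    (minv (A - lam \<cdot>\<^sub>m 1\<^sub>m n) *\<^sub>v (minv (A - lam \<cdot>\<^sub>m 1\<^sub>m n) *\<^sub>v b)) $ j) (at lam)"
proof -
  define R where "R \<mu> = minv (A - \<mu> \<cdot>\<^sub>m 1\<^sub>m n)" for \<mu>
  have E: "A - \<mu> \<cdot>\<^sub>m 1\<^sub>m n \<in> carrier_mat n n" for \<mu>
    using A by (intro minus_carrier_mat smult_carrier_mat one_carrier_mat)
  have Rb: "R lam *\<^sub>v b \<in> carrier_vec n"
    using minv(1)[OF E det] b by (simp add: R_def)
  have "\<forall>\<^sub>F \<mu> in at lam. det (A - \<mu> \<cdot>\<^sub>m 1\<^sub>m n) \<noteq> 0"
    using continuous_on_det_shifted(1)[OF A] det
    by (intro tendsto_imp_eventually_ne) (auto simp: continuous_on_eq_continuous_at isCont_def)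
  then have "\<forall>\<^sub>F \<mu> in at lam. \<mu> \<noteq> lam \<and> det (A - \<mu> \<cdot>\<^sub>m 1\<^sub>m n) \<noteq> 0"
    by (intro eventually_conj eventually_neq_at_within)
  then have "\<forall>\<^sub>F \<mu> in at lam.
      ((R \<mu> *\<^sub>v b) $ j - (R lam *\<^sub>v b) $ j) / (\<mu> - lam) = (R \<mu> *\<^sub>v (R lam *\<^sub>v b)) $ j"
  proof (rule eventually_mono, elim conjE)
    fix \<mu> assume ne: "\<mu> \<noteq> lam" and det\<mu>: "det (A - \<mu> \<cdot>\<^sub>m 1\<^sub>m n) \<noteq> 0"
    have "(R \<mu> *\<^sub>v b - R lam *\<^sub>v b) $ j = ((\<mu> - lam) \<cdot>\<^sub>v (R \<mu> *\<^sub>v (R lam *\<^sub>v b))) $ j"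
      unfolding R_def by (simp only: resolvent_identity[OF A b det\<mu> det])
    then have "(R \<mu> *\<^sub>v b) $ j - (R lam *\<^sub>v b) $ j = (\<mu> - lam) * (R \<mu> *\<^sub>v (R lam *\<^sub>v b)) $ j"
      using j minv(1)[OF E det\<mu>] minv(1)[OF E det] b by (simp add: R_def)
    then show "((R \<mu> *\<^sub>v b) $ j - (R lam *\<^sub>v b) $ j) / (\<mu> - lam) = (R \<mu> *\<^sub>v (R lam *\<^sub>v b)) $ j"
      using ne by (simp add: field_simps)
  qed
  moreover have "((\<lambda>\<mu>. (R \<mu> *\<^sub>v (R lam *\<^sub>v b)) $ j) \<longlongrightarrow> (R lam *\<^sub>v (R lam *\<^sub>v b)) $ j) (at lam)"
    using isCont_resolvent[OF A Rb det j] by (simp add: isCont_def R_def)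
  ultimately show ?thesis
    unfolding has_field_derivative_iff R_def by (simp add: tendsto_cong)
qed

section \<open>Spectral projection onto a simple eigenvalue\<close>

lemma spectral_projection_eqI:
  fixes A :: "complex mat"
  assumes A: "A \<in> carrier_mat N N" and P: "P \<in> carrier_mat N N" "P * P = P"
    and fixed: "\<And>v. v \<in> carrier_vec N \<Longrightarrow> P *\<^sub>v v = v \<longleftrightarrow> ((A - \<mu> \<cdot>\<^sub>m 1\<^sub>m N) ^\<^sub>m N) *\<^sub>v v = 0\<^sub>v N"
    and killed: "\<And>v. v \<in> carrier_vec N \<Longrightarrow>
      P *\<^sub>v v = 0\<^sub>v N \<longleftrightarrow> (\<exists>w\<in>carrier_vec N. v = ((A - \<mu> \<cdot>\<^sub>m 1\<^sub>m N) ^\<^sub>m N) *\<^sub>v w)"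
  shows "spectral_projection A \<mu> = P"
  unfolding spectral_projection_def Let_def
proof (rule the_equality)
  fix P' assume P': "P' \<in> carrier_mat (dim_row A) (dim_row A) \<and> P' * P' = P' \<and>
    (\<forall>v\<in>carrier_vec (dim_row A). P' *\<^sub>v v = v \<longleftrightarrow>
      ((A - \<mu> \<cdot>\<^sub>m 1\<^sub>m (dim_row A)) ^\<^sub>m dim_row A) *\<^sub>v v = 0\<^sub>v (dim_row A)) \<and>
    (\<forall>v\<in>carrier_vec (dim_row A). P' *\<^sub>v v = 0\<^sub>v (dim_row A) \<longleftrightarrow>
      (\<exists>w\<in>carrier_vec (dim_row A). v = ((A - \<mu> \<cdot>\<^sub>m 1\<^sub>m (dim_row A)) ^\<^sub>m dim_row A) *\<^sub>v w))"
  then have P'c: "P' \<in> carrier_mat N N" using A by auto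
  \<comment> \<open>any such P' agrees with P on both summands of v = P v + (v - P v)\<close>
  have "P' *\<^sub>v v = P *\<^sub>v v" if v: "v \<in> carrier_vec N" for v
  proof -
    have Pv: "P *\<^sub>v v \<in> carrier_vec N" using P v by simp
    have "P *\<^sub>v (P *\<^sub>v v) = P *\<^sub>v v"
      using P v by (simp flip: assoc_mult_mat_vec)
    then have "P' *\<^sub>v (P *\<^sub>v v) = P *\<^sub>v v"
      using P' A fixed[OF Pv] Pv by auto
    moreover have "P *\<^sub>v (v - P *\<^sub>v v) = 0\<^sub>v N"
      using \<open>P *\<^sub>v (P *\<^sub>v v) = P *\<^sub>v v\<close> P v Pv by (simp add: mult_minus_distrib_mat_vec)
    then have "P' *\<^sub>v (v - P *\<^sub>v v) = 0\<^sub>v N"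
      using P' A killed[of "v - P *\<^sub>v v"] v Pv by auto
    ultimately have "P' *\<^sub>v v - P *\<^sub>v v = 0\<^sub>v N"
      using P'c v Pv by (simp add: mult_minus_distrib_mat_vec)
    then show ?thesis
      using P'c v Pv by (simp add: minus_vec_eq_zero_iff)
  qed
  then show "P' = P" by (rule eq_mat_mult_vecI[OF P'c P(1)])
qed (use A P fixed killed in auto)

lemma pow_mat_kernel_eq_span:
  fixes X :: "complex mat" and p q :: "complex vec"
  assumes X: "X \<in> carrier_mat N N" and p: "p \<in> carrier_vec N" and q: "q \<in> carrier_vec N"
    and qp: "q \<bullet> p = 1" and Xp: "X *\<^sub>v p = 0\<^sub>v N"
    and qX: "\<And>u. u \<in> carrier_vec N \<Longrightarrow> q \<bullet> (X *\<^sub>v u) = 0"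
    and ker: "\<And>u. u \<in> carrier_vec N \<Longrightarrow> X *\<^sub>v u = 0\<^sub>v N \<Longrightarrow> \<exists>t. u = t \<cdot>\<^sub>v p"
    and k: "k > 0" and v: "v \<in> carrier_vec N"
  shows "(X ^\<^sub>m k) *\<^sub>v v = 0\<^sub>v N \<longleftrightarrow> v = (q \<bullet> v) \<cdot>\<^sub>v p"
proof
  have "(X ^\<^sub>m k) *\<^sub>v (t \<cdot>\<^sub>v p) = 0\<^sub>v N" for t
    using k X p Xp pow_mat_Suc_mult_vec[OF X p, of "k - 1"]
    by (simp add: mult_mat_vec[of _ N N]) (intro eq_vecI; simp)
  then show "v = (q \<bullet> v) \<cdot>\<^sub>v p \<Longrightarrow> (X ^\<^sub>m k) *\<^sub>v v = 0\<^sub>v N" by metis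
  \<comment> \<open>on the complement of p, X and hence every power of X is injective\<close>
  have inj: "u = 0\<^sub>v N" if "u \<in> carrier_vec N" "q \<bullet> u = 0" "(X ^\<^sub>m j) *\<^sub>v u = 0\<^sub>v N" for j u
    using that
  proof (induction j arbitrary: u)
    case 0
    then show ?case using X by simp
  next
    case (Suc j)
    have "X *\<^sub>v u = 0\<^sub>v N"
      using Suc.IH[of "X *\<^sub>v u"] Suc.prems X qX pow_mat_Suc_mult_vec[OF X] by simp
    then obtain t where t: "u = t \<cdot>\<^sub>v p" using ker Suc.prems(1) by blast
    then have "t = 0" using Suc.prems(2) qp q p by simp
    then show ?case using t p by (intro eq_vecI) auto
  qed
  assume "(X ^\<^sub>m k) *\<^sub>v v = 0\<^sub>v N"
  moreover have "(X ^\<^sub>m k) *\<^sub>v ((q \<bullet> v) \<cdot>\<^sub>v p) = 0\<^sub>v N"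
    using \<open>\<And>t. (X ^\<^sub>m k) *\<^sub>v (t \<cdot>\<^sub>v p) = 0\<^sub>v N\<close> .
  ultimately have "(X ^\<^sub>m k) *\<^sub>v (v - (q \<bullet> v) \<cdot>\<^sub>v p) = 0\<^sub>v N"
    using X p v by (simp add: mult_minus_distrib_mat_vec[of _ N N])
  moreover have "q \<bullet> (v - (q \<bullet> v) \<cdot>\<^sub>v p) = 0"
    using p q v qp by (simp add: scalar_prod_minus_distrib[of _ N])
  ultimately have "v - (q \<bullet> v) \<cdot>\<^sub>v p = 0\<^sub>v N"
    using inj p v by simp
  then show "v = (q \<bullet> v) \<cdot>\<^sub>v p"
    using p v by (simp add: minus_vec_eq_zero_iff)
qed

lemma pow_mat_range_eq_complement:
  fixes X :: "complex mat" and q :: "complex vec"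
  assumes X: "X \<in> carrier_mat N N" and q: "q \<in> carrier_vec N"
    and qX: "\<And>u. u \<in> carrier_vec N \<Longrightarrow> q \<bullet> (X *\<^sub>v u) = 0"
    and onto: "\<And>v. v \<in> carrier_vec N \<Longrightarrow> q \<bullet> v = 0 \<Longrightarrow> \<exists>x\<in>carrier_vec N. q \<bullet> x = 0 \<and> X *\<^sub>v x = v"
    and k: "k > 0" and v: "v \<in> carrier_vec N"
  shows "(\<exists>w\<in>carrier_vec N. v = (X ^\<^sub>m k) *\<^sub>v w) \<longleftrightarrow> q \<bullet> v = 0"
proof
  have "q \<bullet> ((X ^\<^sub>m Suc j) *\<^sub>v w) = 0" if "w \<in> carrier_vec N" for j w
    using that
  proof (induction j arbitrary: w)
    case 0
    then show ?case using X qX by simp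
  next
    case (Suc j)
    have "X *\<^sub>v w \<in> carrier_vec N" using X Suc.prems by simp
    then show ?case
      unfolding pow_mat_Suc_mult_vec[OF X Suc.prems] by (rule Suc.IH)
  qed
  then show "\<exists>w\<in>carrier_vec N. v = (X ^\<^sub>m k) *\<^sub>v w \<Longrightarrow> q \<bullet> v = 0"
    using k by (metis Suc_pred)
  have "\<exists>x\<in>carrier_vec N. q \<bullet> x = 0 \<and> (X ^\<^sub>m j) *\<^sub>v x = v"
    if "v \<in> carrier_vec N" "q \<bullet> v = 0" for j v
    using that
  proof (induction j arbitrary: v)
    case 0
    then show ?case using X by auto
  next
    case (Suc j)
    then obtain y where y: "y \<in> carrier_vec N" "q \<bullet> y = 0" "(X ^\<^sub>m j) *\<^sub>v y = v" by blast
    then obtain x where "x \<in> carrier_vec N" "q \<bullet> x = 0" "X *\<^sub>v x = y" using onto by blast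
    then show ?case using y pow_mat_Suc_mult_vec[OF X] by metis
  qed
  then show "q \<bullet> v = 0 \<Longrightarrow> \<exists>w\<in>carrier_vec N. v = (X ^\<^sub>m k) *\<^sub>v w"
    using v by metis
qed

lemma dyad_mult_vec:
  fixes p q v :: "'a::comm_ring_1 vec"
  assumes p: "p \<in> carrier_vec N" and q: "q \<in> carrier_vec N" and v: "v \<in> carrier_vec N"
  shows "mat N N (\<lambda>(i, j). (q \<bullet> unit_vec N j \<cdot>\<^sub>v p) $ i) *\<^sub>v v = (q \<bullet> v) \<cdot>\<^sub>v p"
proof (rule eq_vecI)
  fix i assume "i < dim_vec ((q \<bullet> v) \<cdot>\<^sub>v p)"
  then have i: "i < N" using p by simp
  have "(\<Sum>j = 0..<N. (q \<bullet> unit_vec N j \<cdot>\<^sub>v p) $ i * v $ j) = (\<Sum>j = 0..<N. p $ i * (q $ j * v $ j))"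
    using i p q by (intro sum.cong) (auto simp: ac_simps)
  then show "(mat N N (\<lambda>(i, j). (q \<bullet> unit_vec N j \<cdot>\<^sub>v p) $ i) *\<^sub>v v) $ i = ((q \<bullet> v) \<cdot>\<^sub>v p) $ i"
    using i p v by (simp add: scalar_prod_def row_def sum_distrib_left ac_simps)
qed (use p in simp)

lemma dyad_projection:
  fixes p q :: "complex vec"
  assumes P: "P = mat N N (\<lambda>(i, j). (q \<bullet> unit_vec N j \<cdot>\<^sub>v p) $ i)"
    and p: "p \<in> carrier_vec N" and q: "q \<in> carrier_vec N" and qp: "q \<bullet> p = 1"
  shows "P * P = P"
    and "v \<in> carrier_vec N \<Longrightarrow> P *\<^sub>v v = 0\<^sub>v N \<longleftrightarrow> q \<bullet> v = 0"
proof -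
  have Pv: "P *\<^sub>v v = (q \<bullet> v) \<cdot>\<^sub>v p" if "v \<in> carrier_vec N" for v
    unfolding P by (rule dyad_mult_vec[OF p q that])
  have Pc: "P \<in> carrier_mat N N" by (simp add: P)
  show "P * P = P"
    using Pc p q qp by (intro eq_mat_mult_vecI) (auto simp: Pv scalar_prod_smult_right)
  show "P *\<^sub>v v = 0\<^sub>v N \<longleftrightarrow> q \<bullet> v = 0" if v: "v \<in> carrier_vec N"
  proof
    assume "P *\<^sub>v v = 0\<^sub>v N"
    then have "q \<bullet> (P *\<^sub>v v) = 0" using q by simp
    then show "q \<bullet> v = 0" using Pv[OF v] qp p q by simp
  qed (use Pv[OF v] p in \<open>auto intro!: eq_vecI\<close>)
qed

lemma spectral_projection_simple_eigenvalue:
  fixes A :: "complex mat" and p q :: "complex vec"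
  assumes A: "A \<in> carrier_mat N N" and p: "p \<in> carrier_vec N" and q: "q \<in> carrier_vec N"
    and qp: "q \<bullet> p = 1" and right: "A *\<^sub>v p = \<mu> \<cdot>\<^sub>v p"
    and left: "\<And>u. u \<in> carrier_vec N \<Longrightarrow> q \<bullet> (A *\<^sub>v u) = \<mu> * (q \<bullet> u)"
    and eigenspace: "\<And>u. u \<in> carrier_vec N \<Longrightarrow> A *\<^sub>v u = \<mu> \<cdot>\<^sub>v u \<Longrightarrow> \<exists>t. u = t \<cdot>\<^sub>v p"
    and onto: "\<And>v. v \<in> carrier_vec N \<Longrightarrow> q \<bullet> v = 0 \<Longrightarrow>
      \<exists>x\<in>carrier_vec N. q \<bullet> x = 0 \<and> A *\<^sub>v x - \<mu> \<cdot>\<^sub>v x = v"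
  shows "spectral_projection A \<mu> = mat N N (\<lambda>(i, j). (q \<bullet> unit_vec N j \<cdot>\<^sub>v p) $ i)"
proof -
  define X where "X = A - \<mu> \<cdot>\<^sub>m 1\<^sub>m N"
  define P where "P = mat N N (\<lambda>(i, j). (q \<bullet> unit_vec N j \<cdot>\<^sub>v p) $ i)"
  have X: "X \<in> carrier_mat N N"
    using A unfolding X_def by (intro minus_carrier_mat smult_carrier_mat one_carrier_mat)
  have Xu: "X *\<^sub>v u = A *\<^sub>v u - \<mu> \<cdot>\<^sub>v u" if "u \<in> carrier_vec N" for u
    unfolding X_def by (rule shifted_mult_vec[OF A that])
  have N: "N > 0" using qp p by (cases N) (auto simp: scalar_prod_def)
  have "X *\<^sub>v p = 0\<^sub>v N" using Xu[OF p] right p by (simp add: minus_vec_eq_zero_iff)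
  moreover have "q \<bullet> (X *\<^sub>v u) = 0" if "u \<in> carrier_vec N" for u
    using Xu[OF that] left[OF that] that A q by (simp add: scalar_prod_minus_distrib[of _ N])
  moreover have "\<exists>t. u = t \<cdot>\<^sub>v p" if "u \<in> carrier_vec N" "X *\<^sub>v u = 0\<^sub>v N" for u
    using Xu that A eigenspace by (simp add: minus_vec_eq_zero_iff)
  moreover have "\<exists>x\<in>carrier_vec N. q \<bullet> x = 0 \<and> X *\<^sub>v x = v" if "v \<in> carrier_vec N" "q \<bullet> v = 0" for v
    using onto[OF that] Xu by auto
  ultimately have ker: "(X ^\<^sub>m N) *\<^sub>v v = 0\<^sub>v N \<longleftrightarrow> v = (q \<bullet> v) \<cdot>\<^sub>v p"
    and range: "(\<exists>w\<in>carrier_vec N. v = (X ^\<^sub>m N) *\<^sub>v w) \<longleftrightarrow> q \<bullet> v = 0"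
    if "v \<in> carrier_vec N" for v
    using pow_mat_kernel_eq_span[OF X p q qp] pow_mat_range_eq_complement[OF X q] N that by blast+
  have Pv: "P *\<^sub>v v = (q \<bullet> v) \<cdot>\<^sub>v p" if "v \<in> carrier_vec N" for v
    unfolding P_def by (rule dyad_mult_vec[OF p q that])
  have P: "P \<in> carrier_mat N N" by (simp add: P_def)
  note dyad = dyad_projection[OF P_def p q qp]
  show ?thesis
    unfolding P_def[symmetric]
  proof (rule spectral_projection_eqI[OF A P dyad(1)])
    fix v :: "complex vec" assume v: "v \<in> carrier_vec N"
    show "P *\<^sub>v v = v \<longleftrightarrow> ((A - \<mu> \<cdot>\<^sub>m 1\<^sub>m N) ^\<^sub>m N) *\<^sub>v v = 0\<^sub>v N"
      unfolding X_def[symmetric] ker[OF v] Pv[OF v] by auto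
    show "P *\<^sub>v v = 0\<^sub>v N \<longleftrightarrow> (\<exists>w\<in>carrier_vec N. v = ((A - \<mu> \<cdot>\<^sub>m 1\<^sub>m N) ^\<^sub>m N) *\<^sub>v w)"
      unfolding X_def[symmetric] range[OF v] by (rule dyad(2)[OF v])
  qed
qed

section \<open>The discretised operator\<close>

abbreviation lagc :: "(nat \<Rightarrow> real) \<Rightarrow> nat \<Rightarrow> nat \<Rightarrow> real \<Rightarrow> complex" where
  "lagc \<theta> n j \<equiv> (\<lambda>t. complex_of_real (lag \<theta> n j t))"

lemma continuous_on_lagc: "continuous_on S (lagc \<theta> n j)"
  unfolding lag_def divide_inverse by (intro continuous_intros)

lemma continuous_on_Pop: "continuous_on S (Pop \<theta> n y)"
  unfolding Pop_def by (intro continuous_intros continuous_on_lagc)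

definition lag_values :: "((real \<Rightarrow> real) \<Rightarrow> real) \<Rightarrow> (nat \<Rightarrow> real) \<Rightarrow> nat \<Rightarrow> complex vec" where
  "lag_values \<Phi> \<theta> n = vec n (\<lambda>j. cext \<Phi> (lagc \<theta> n (j + 1)))"

lemma lag_values_carrier [simp]: "lag_values \<Phi> \<theta> n \<in> carrier_vec n"
  and dim_vec_lag_values [simp]: "dim_vec (lag_values \<Phi> \<theta> n) = n"
  by (simp_all add: lag_values_def)

lemma cext_Pop:
  assumes \<Phi>: "bounded_linear_functional \<Phi>"
  shows "cext \<Phi> (Pop \<theta> n y) = y \<bullet> lag_values \<Phi> \<theta> n"
proof -
  have "cext \<Phi> (Pop \<theta> n y) = (\<Sum>j<n. cext \<Phi> (\<lambda>t. y $ j * lagc \<theta> n (j + 1) t))"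
    unfolding Pop_def using \<Phi>
    by (intro cext_sum) (auto intro!: continuous_intros continuous_on_lagc)
  also have "\<dots> = (\<Sum>j<n. y $ j * cext \<Phi> (lagc \<theta> n (j + 1)))"
    using \<Phi> by (intro sum.cong refl cext_cmult continuous_on_lagc)
  finally show ?thesis
    by (simp add: scalar_prod_def lag_values_def lessThan_atLeast0)
qed

lemma cext_P0op:
  assumes \<Phi>: "bounded_linear_functional \<Phi>"
  shows "cext \<Phi> (P0op \<theta> n y0 y) = y0 * cext \<Phi> (lagc \<theta> n 0) + y \<bullet> lag_values \<Phi> \<theta> n"
proof -
  have "cext \<Phi> (P0op \<theta> n y0 y) = cext \<Phi> (\<lambda>t. y0 * lagc \<theta> n 0 t) + cext \<Phi> (Pop \<theta> n y)"
    unfolding P0op_def using \<Phi>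
    by (intro cext_add continuous_intros continuous_on_lagc continuous_on_Pop)
  then show ?thesis
    using cext_cmult[OF \<Phi> continuous_on_lagc] by (simp add: cext_Pop[OF \<Phi>])
qed

lemma cext_pin:
  assumes "bounded_linear_functional \<Phi>"
  shows "cext \<Phi> (pin \<theta> n \<mu>) = cext \<Phi> (lagc \<theta> n 0)
    + (minv (Dmat \<theta> n - \<mu> \<cdot>\<^sub>m 1\<^sub>m n) *\<^sub>v (Dmat \<theta> n *\<^sub>v onevec n)) \<bullet> lag_values \<Phi> \<theta> n"
proof -
  have "pin \<theta> n \<mu> = P0op \<theta> n 1 (minv (Dmat \<theta> n - \<mu> \<cdot>\<^sub>m 1\<^sub>m n) *\<^sub>v (Dmat \<theta> n *\<^sub>v onevec n))"
    unfolding pin_def P0op_def by simp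
  then show ?thesis using cext_P0op[OF assms] by simp
qed

lemma Deltan_eq:
  assumes "bounded_linear_functional (L a)"
  shows "Deltan L \<theta> n \<mu> a = \<mu> - cext (L a) (lagc \<theta> n 0)
    - (minv (Dmat \<theta> n - \<mu> \<cdot>\<^sub>m 1\<^sub>m n) *\<^sub>v (Dmat \<theta> n *\<^sub>v onevec n)) \<bullet> lag_values (L a) \<theta> n"
  unfolding Deltan_def cext_pin[OF assms] by simp

lemma D2Delta_eq:
  assumes deriv: "\<And>g. contX g \<Longrightarrow> ((\<lambda>b. L b g) has_real_derivative L' g) (at a)"
    and L': "bounded_linear_functional L'"
  shows "D2Delta L \<theta> n lam a = - (cext L' (lagc \<theta> n 0)
    + (minv (Dmat \<theta> n - lam \<cdot>\<^sub>m 1\<^sub>m n) *\<^sub>v (Dmat \<theta> n *\<^sub>v onevec n)) \<bullet> lag_values L' \<theta> n)"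
proof -
  have "continuous_on {-1..0} (pin \<theta> n lam)"
    unfolding pin_def by (intro continuous_intros continuous_on_lagc continuous_on_Pop)
  then have "((\<lambda>b. Deltan L \<theta> n lam b) has_vector_derivative 0 - cext L' (pin \<theta> n lam)) (at a)"
    unfolding Deltan_def
    by (intro has_vector_derivative_diff has_vector_derivative_const
        cext_has_vector_derivative[OF deriv])
  then show ?thesis
    unfolding D2Delta_def cext_pin[OF L'] by (simp add: vector_derivative_at)
qed

lemma Dmat_carrier [simp]: "Dmat \<theta> n \<in> carrier_mat n n"
  and dim_row_Dmat [simp]: "dim_row (Dmat \<theta> n) = n"
  and dim_col_Dmat [simp]: "dim_col (Dmat \<theta> n) = n"
  and onevec_carrier [simp]: "onevec n \<in> carrier_vec n"
  by (simp_all add: Dmat_def onevec_def)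

lemma dim_vec_consv [simp]: "dim_vec (consv n x y) = n + 1"
  and consv_carrier [simp]: "consv n x y \<in> carrier_vec (n + 1)"
  and headv_consv [simp]: "headv (consv n x y) = x"
  and tailv_carrier [simp]: "tailv n v \<in> carrier_vec n"
  by (simp_all add: consv_def headv_def tailv_def)

lemma tailv_consv [simp]: "dim_vec y = n \<Longrightarrow> tailv n (consv n x y) = y"
  by (auto simp: tailv_def consv_def)

lemma consv_eq_iff:
  "dim_vec y = n \<Longrightarrow> dim_vec y' = n \<Longrightarrow> consv n x y = consv n x' y' \<longleftrightarrow> x = x' \<and> y = y'"
  by (metis headv_consv tailv_consv)

lemma consv_headv_tailv: "v \<in> carrier_vec (n + 1) \<Longrightarrow> consv n (headv v) (tailv n v) = v"
  unfolding consv_def headv_def tailv_def by (intro eq_vecI) (auto simp: gr0_conv_Suc)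

lemma smult_consv: "dim_vec y = n \<Longrightarrow> k \<cdot>\<^sub>v consv n x y = consv n (k * x) (k \<cdot>\<^sub>v y)"
  by (auto simp: consv_def)

lemma minus_consv:
  "dim_vec y = n \<Longrightarrow> dim_vec y' = n \<Longrightarrow> consv n x y - consv n x' y' = consv n (x - x') (y - y')"
  by (auto simp: consv_def)

lemma scalar_prod_consv:
  assumes "dim_vec y' = n"
  shows "consv n x y \<bullet> consv n x' y' = x * x' + y \<bullet> y'"
  using assms
  by (simp add: scalar_prod_def consv_def sum.atLeast0_lessThan_Suc_shift del: sum.op_ivl_Suc)

lemma mult_mat_vec_consv_index:
  assumes "A \<in> carrier_mat m (n + 1)" "i < m"
  shows "(A *\<^sub>v consv n x y) $ i = A $$ (i, 0) * x + (\<Sum>k<n. A $$ (i, Suc k) * y $ k)"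
  using assms by (simp add: scalar_prod_def consv_def row_def sum.atLeast0_lessThan_Suc_shift
      lessThan_atLeast0 del: sum.op_ivl_Suc)

lemma An_carrier [simp]: "An L \<theta> n a \<in> carrier_mat (n + 1) (n + 1)"
  and dim_row_An [simp]: "dim_row (An L \<theta> n a) = n + 1"
  and dim_col_An [simp]: "dim_col (An L \<theta> n a) = n + 1"
  by (simp_all add: An_def)

lemma An_index:
  assumes "bounded_linear_functional (L a)" "i < n + 1" "j < n + 1"
  shows "An L \<theta> n a $$ (i, j) =
    (if i = 0 then if j = 0 then cext (L a) (lagc \<theta> n 0) else lag_values (L a) \<theta> n $ (j - 1)
     else if j = 0 then - (Dmat \<theta> n *\<^sub>v onevec n) $ (i - 1) else Dmat \<theta> n $$ (i - 1, j - 1))"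
proof -
  have "headv (unit_vec (n + 1) j) = (if j = 0 then 1 else 0)"
    by (simp add: headv_def unit_vec_def)
  moreover have "tailv n (unit_vec (n + 1) j) = (if j = 0 then 0\<^sub>v n else unit_vec n (j - 1))"
    using assms(3) by (auto simp: tailv_def unit_vec_def intro!: eq_vecI)
  moreover have "row (Dmat \<theta> n) k \<bullet> 0\<^sub>v n = 0" for k
    using scalar_prod_right_zero[OF row_carrier, of "Dmat \<theta> n"] by simp
  ultimately show ?thesis
    using assms by (auto simp: An_def An_map_def consv_def cext_P0op)
qed

lemma An_mult_consv:
  assumes L: "bounded_linear_functional (L a)" and y: "y \<in> carrier_vec n"
  shows "An L \<theta> n a *\<^sub>v consv n x y =
    consv n (x * cext (L a) (lagc \<theta> n 0) + y \<bullet> lag_values (L a) \<theta> n)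
      (Dmat \<theta> n *\<^sub>v y - x \<cdot>\<^sub>v (Dmat \<theta> n *\<^sub>v onevec n))" (is "_ = ?r")
proof (rule eq_vecI)
  fix i assume "i < dim_vec ?r"
  then have i: "i < n + 1" by simp
  show "(An L \<theta> n a *\<^sub>v consv n x y) $ i = ?r $ i"
    unfolding mult_mat_vec_consv_index[OF An_carrier i] using i y
    by (cases i) (auto simp: An_index[where L = L and a = a, OF L] consv_def scalar_prod_def
        row_def lessThan_atLeast0 ac_simps)
qed simp

lemma transpose_An_mult_consv:
  assumes L: "bounded_linear_functional (L a)" and y: "y \<in> carrier_vec n"
  shows "transpose_mat (An L \<theta> n a) *\<^sub>v consv n x y =
    consv n (x * cext (L a) (lagc \<theta> n 0) - (Dmat \<theta> n *\<^sub>v onevec n) \<bullet> y)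
      (x \<cdot>\<^sub>v lag_values (L a) \<theta> n + transpose_mat (Dmat \<theta> n) *\<^sub>v y)" (is "_ = ?r")
proof (rule eq_vecI)
  fix i assume "i < dim_vec ?r"
  then have i: "i < n + 1" by simp
  have AT: "transpose_mat (An L \<theta> n a) \<in> carrier_mat (n + 1) (n + 1)"
    by (simp add: An_def)
  show "(transpose_mat (An L \<theta> n a) *\<^sub>v consv n x y) $ i = ?r $ i"
    unfolding mult_mat_vec_consv_index[OF AT i] using i y
    by (cases i) (auto simp: An_index[where L = L and a = a, OF L] consv_def scalar_prod_def
        row_def col_def lessThan_atLeast0 sum_negf ac_simps)
qed simp

lemma An'_index:
  assumes bounded: "\<forall>b. bounded_linear_functional (L b)"
    and deriv: "\<And>g. contX g \<Longrightarrow> ((\<lambda>b. L b g) has_real_derivative L' g) (at a)"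
    and ij: "i < n + 1" "j < n + 1"
  shows "An' L \<theta> n a $$ (i, j) =
    (if i = 0 then if j = 0 then cext L' (lagc \<theta> n 0) else lag_values L' \<theta> n $ (j - 1) else 0)"
proof -
  have "(\<lambda>b. An L \<theta> n b $$ (i, j)) =
    (\<lambda>b. if i = 0 then cext (L b) (lagc \<theta> n j)
      else if j = 0 then - (Dmat \<theta> n *\<^sub>v onevec n) $ (i - 1) else Dmat \<theta> n $$ (i - 1, j - 1))"
    using ij bounded by (intro ext) (auto simp: An_index lag_values_def)
  moreover have "((\<lambda>b. cext (L b) (lagc \<theta> n j)) has_vector_derivative cext L' (lagc \<theta> n j)) (at a)"
    by (rule cext_has_vector_derivative[OF deriv continuous_on_lagc])
  ultimately show ?thesis
    using ij by (auto simp: An'_def lag_values_def vector_derivative_at)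
qed

lemma An'_mult_consv:
  assumes bounded: "\<forall>b. bounded_linear_functional (L b)"
    and deriv: "\<And>g. contX g \<Longrightarrow> ((\<lambda>b. L b g) has_real_derivative L' g) (at a)"
    and y: "y \<in> carrier_vec n"
  shows "An' L \<theta> n a *\<^sub>v consv n x y =
    consv n (x * cext L' (lagc \<theta> n 0) + y \<bullet> lag_values L' \<theta> n) (0\<^sub>v n)" (is "_ = ?r")
proof (rule eq_vecI)
  have A': "An' L \<theta> n a \<in> carrier_mat (n + 1) (n + 1)" by (simp add: An'_def)
  fix i assume "i < dim_vec ?r"
  then have i: "i < n + 1" by simp
  show "(An' L \<theta> n a *\<^sub>v consv n x y) $ i = ?r $ i"
    unfolding mult_mat_vec_consv_index[OF A' i] using i y
    by (auto simp: An'_index[OF bounded deriv] consv_def scalar_prod_def lessThan_atLeast0 ac_simps)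
qed (simp add: An'_def)

section \<open>A simple characteristic root\<close>

locale simple_characteristic_root =
  fixes L :: "real \<Rightarrow> (real \<Rightarrow> real) \<Rightarrow> real" and \<theta> :: "nat \<Rightarrow> real" and n :: nat
    and a :: real and lam :: complex
  assumes bounded: "\<forall>b. bounded_linear_functional (L b)"
    and invertible: "invertible_mat (Dmat \<theta> n - lam \<cdot>\<^sub>m 1\<^sub>m n)"
    and root: "Deltan L \<theta> n lam a = 0"
    and simple: "D1Delta L \<theta> n lam a \<noteq> 0"
begin

abbreviation "E \<equiv> Dmat \<theta> n - lam \<cdot>\<^sub>m 1\<^sub>m n"
abbreviation "G \<equiv> lam \<cdot>\<^sub>m 1\<^sub>m n - Dmat \<theta> n"
abbreviation "F \<equiv> lam \<cdot>\<^sub>m 1\<^sub>m n - transpose_mat (Dmat \<theta> n)"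
abbreviation "d \<equiv> Dmat \<theta> n *\<^sub>v onevec n"
abbreviation "l0 \<equiv> cext (L a) (lagc \<theta> n 0)"
abbreviation "lv \<equiv> lag_values (L a) \<theta> n"
abbreviation "c \<equiv> minv E *\<^sub>v d"
abbreviation "w \<equiv> minv F *\<^sub>v lv"
abbreviation "\<delta> \<equiv> D1Delta L \<theta> n lam a"
abbreviation "p \<equiv> consv n 1 c"
abbreviation "q \<equiv> consv n (1 / \<delta>) ((1 / \<delta>) \<cdot>\<^sub>v w)"

lemma bounded_at: "bounded_linear_functional (L a)"
  using bounded by blast

lemmas An_mult_consv_at = An_mult_consv[where L = L and a = a, OF bounded_at]
  and transpose_An_mult_consv_at = transpose_An_mult_consv[where L = L and a = a, OF bounded_at]
  and Deltan_eq_at = Deltan_eq[where L = L and a = a, OF bounded_at]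

lemma E_carrier [simp]: "E \<in> carrier_mat n n"
  and G_carrier [simp]: "G \<in> carrier_mat n n"
  and F_carrier [simp]: "F \<in> carrier_mat n n"
  by auto

lemma det_E: "det E \<noteq> 0"
  by (rule invertible_mat_det_nonzero[OF E_carrier invertible])

lemma G_eq: "G = (-1) \<cdot>\<^sub>m E"
  and F_eq: "F = transpose_mat G"
  and transpose_E: "transpose_mat E = (-1) \<cdot>\<^sub>m F"
  by (auto intro!: eq_matI)

lemma det_G: "det G \<noteq> 0"
  using det_E by (simp add: G_eq)

lemma det_F: "det F \<noteq> 0"
  using det_G by (simp add: F_eq det_transpose[OF G_carrier])

lemma d_carrier [simp]: "d \<in> carrier_vec n"
  by (rule mult_mat_vec_carrier[OF Dmat_carrier onevec_carrier])

lemma dim_row_minv_E [simp]: "dim_row (minv E) = n"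
  and dim_row_minv_F [simp]: "dim_row (minv F) = n"
  using minv(1)[OF E_carrier det_E] minv(1)[OF F_carrier det_F] by auto

lemma c_carrier [simp]: "c \<in> carrier_vec n"
  and w_carrier [simp]: "w \<in> carrier_vec n"
  using minv(1)[OF E_carrier det_E] minv(1)[OF F_carrier det_F]
  by (auto intro: mult_mat_vec_carrier)

lemma dim_vec_d [simp]: "dim_vec d = n"
  and dim_vec_c [simp]: "dim_vec c = n"
  by simp_all

lemma E_c: "E *\<^sub>v c = d"
  using minv_mult_vec_cancel(1)[OF E_carrier det_E d_carrier] by simp

lemma F_w: "F *\<^sub>v w = lv"
  by (rule minv_mult_vec_cancel(1)[OF F_carrier det_F lag_values_carrier])

lemma w_scalar_prod_E: "y \<in> carrier_vec n \<Longrightarrow> w \<bullet> (E *\<^sub>v y) = - (lv \<bullet> y)"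
  using transpose_vec_mult_scalar[OF E_carrier _ w_carrier, of y] F_w
  by (simp add: transpose_E smult_mat_mult_vec[OF F_carrier])

lemma root_eq: "lam = l0 + c \<bullet> lv"
  using root unfolding Deltan_eq_at by (simp add: algebra_simps)

lemma D1Delta_eq: "\<delta> = 1 - (minv E *\<^sub>v c) \<bullet> lv"
proof -
  have "((\<lambda>\<mu>. \<mu> - l0 - (\<Sum>j<n. (minv (Dmat \<theta> n - \<mu> \<cdot>\<^sub>m 1\<^sub>m n) *\<^sub>v d) $ j * lv $ j))
      has_field_derivative 1 - 0 - (\<Sum>j<n. (minv E *\<^sub>v c) $ j * lv $ j)) (at lam)"
    using resolvent_has_field_derivative[OF Dmat_carrier d_carrier det_E]
    by (intro DERIV_diff DERIV_ident DERIV_const DERIV_sum DERIV_cmult_right) auto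
  moreover have "(\<lambda>\<mu>. Deltan L \<theta> n \<mu> a) =
      (\<lambda>\<mu>. \<mu> - l0 - (\<Sum>j<n. (minv (Dmat \<theta> n - \<mu> \<cdot>\<^sub>m 1\<^sub>m n) *\<^sub>v d) $ j * lv $ j))"
    unfolding Deltan_eq_at by (simp add: scalar_prod_def lessThan_atLeast0)
  ultimately show ?thesis
    unfolding D1Delta_def by (simp add: DERIV_imp_deriv scalar_prod_def lessThan_atLeast0)
qed

lemma w_scalar_prod_c: "w \<bullet> c = \<delta> - 1"
proof -
  have "minv E *\<^sub>v c \<in> carrier_vec n"
    using minv(1)[OF E_carrier det_E] by simp
  moreover have "E *\<^sub>v (minv E *\<^sub>v c) = c"
    by (rule minv_mult_vec_cancel(1)[OF E_carrier det_E c_carrier])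
  ultimately have "w \<bullet> c = - (lv \<bullet> (minv E *\<^sub>v c))"
    using w_scalar_prod_E by metis
  then show ?thesis
    using D1Delta_eq comm_scalar_prod[OF lag_values_carrier \<open>minv E *\<^sub>v c \<in> carrier_vec n\<close>] by simp
qed

lemma d_scalar_prod_w: "d \<bullet> w = - (c \<bullet> lv)"
  using w_scalar_prod_E[OF c_carrier] E_c comm_scalar_prod[of d n w] comm_scalar_prod[of lv n c]
  by simp

lemma An_mult_p: "An L \<theta> n a *\<^sub>v p = lam \<cdot>\<^sub>v p"
proof -
  have "Dmat \<theta> n *\<^sub>v c - d = lam \<cdot>\<^sub>v c"
  proof (rule eq_vecI)
    fix i assume "i < dim_vec (lam \<cdot>\<^sub>v c)"
    then have "i < n" by simp
    then have "(Dmat \<theta> n *\<^sub>v c) $ i - lam * c $ i = d $ i"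
      using arg_cong[OF E_c, of "\<lambda>v. v $ i"]
      by (simp add: shifted_mult_vec[OF Dmat_carrier c_carrier])
    then show "(Dmat \<theta> n *\<^sub>v c - d) $ i = (lam \<cdot>\<^sub>v c) $ i"
      using \<open>i < n\<close> by (simp only: index_minus_vec(1) index_smult_vec(1) dim_vec_d dim_vec_c)
        (metis add.commute diff_eq_eq)
  qed simp
  then show ?thesis
    using root_eq by (simp add: An_mult_consv_at smult_consv consv_eq_iff)
qed

lemma transpose_An_mult_q: "transpose_mat (An L \<theta> n a) *\<^sub>v q = lam \<cdot>\<^sub>v q"
proof -
  have tail: "(1 / \<delta>) \<cdot>\<^sub>v lv + transpose_mat (Dmat \<theta> n) *\<^sub>v ((1 / \<delta>) \<cdot>\<^sub>v w)
      = lam \<cdot>\<^sub>v ((1 / \<delta>) \<cdot>\<^sub>v w)"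
  proof (rule eq_vecI)
    fix i assume "i < dim_vec (lam \<cdot>\<^sub>v ((1 / \<delta>) \<cdot>\<^sub>v w))"
    then have i: "i < n" by simp
    have "lam * w $ i - (transpose_mat (Dmat \<theta> n) *\<^sub>v w) $ i = lv $ i"
      using arg_cong[OF F_w, of "\<lambda>v. v $ i"] i by (simp add: shifted_neg_mult_vec)
    moreover have "(transpose_mat (Dmat \<theta> n) *\<^sub>v ((1 / \<delta>) \<cdot>\<^sub>v w)) $ i
        = (1 / \<delta>) * (transpose_mat (Dmat \<theta> n) *\<^sub>v w) $ i"
      using i by (simp add: mult_mat_vec[of _ n n])
    ultimately show "((1 / \<delta>) \<cdot>\<^sub>v lv + transpose_mat (Dmat \<theta> n) *\<^sub>v ((1 / \<delta>) \<cdot>\<^sub>v w)) $ i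
        = (lam \<cdot>\<^sub>v ((1 / \<delta>) \<cdot>\<^sub>v w)) $ i"
      using i by (simp add: algebra_simps add_divide_distrib)
  qed simp
  have "(1 / \<delta>) * l0 - d \<bullet> ((1 / \<delta>) \<cdot>\<^sub>v w) = (l0 + c \<bullet> lv) * (1 / \<delta>)"
    using d_scalar_prod_w by (simp add: algebra_simps)
  then have head: "(1 / \<delta>) * l0 - d \<bullet> ((1 / \<delta>) \<cdot>\<^sub>v w) = lam * (1 / \<delta>)"
    unfolding root_eq[symmetric] .
  show ?thesis
    using head tail
    by (simp add: transpose_An_mult_consv_at smult_consv consv_eq_iff)
qed

lemma q_scalar_prod_p: "q \<bullet> p = 1"
  using w_scalar_prod_c simple by (simp add: scalar_prod_consv scalar_prod_smult_left field_simps)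

lemma q_scalar_prod_An:
  assumes u: "u \<in> carrier_vec (n + 1)"
  shows "q \<bullet> (An L \<theta> n a *\<^sub>v u) = lam * (q \<bullet> u)"
proof -
  have "q \<bullet> (An L \<theta> n a *\<^sub>v u) = (transpose_mat (An L \<theta> n a) *\<^sub>v q) \<bullet> u"
    by (rule transpose_vec_mult_scalar[OF An_carrier u consv_carrier, symmetric])
  then show ?thesis
    using u by (simp add: transpose_An_mult_q)
qed

lemma eigenspace_An:
  assumes u: "u \<in> carrier_vec (n + 1)" and eig: "An L \<theta> n a *\<^sub>v u = lam \<cdot>\<^sub>v u"
  shows "u = headv u \<cdot>\<^sub>v p"
proof -
  define h y where "h = headv u" and "y = tailv n u"
  have y: "y \<in> carrier_vec n" by (simp add: y_def)
  have u_eq: "u = consv n h y"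
    using consv_headv_tailv[OF u] by (simp add: h_def y_def)
  have tail: "Dmat \<theta> n *\<^sub>v y - h \<cdot>\<^sub>v d = lam \<cdot>\<^sub>v y"
    using eig y unfolding u_eq
    by (simp add: An_mult_consv_at smult_consv consv_eq_iff)
  have "E *\<^sub>v y = h \<cdot>\<^sub>v d"
  proof (rule eq_vecI)
    fix i assume "i < dim_vec (h \<cdot>\<^sub>v d)"
    then have i: "i < n" by simp
    have "(Dmat \<theta> n *\<^sub>v y) $ i - h * d $ i = lam * y $ i"
      using arg_cong[OF tail, of "\<lambda>v. v $ i"] i y by simp
    then show "(E *\<^sub>v y) $ i = (h \<cdot>\<^sub>v d) $ i"
      using i y by (simp add: shifted_mult_vec[OF Dmat_carrier y]) (metis diff_eq_eq add.commute)
  qed (use y in simp)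
  then have "y = h \<cdot>\<^sub>v c"
    using minv_mult_vec_cancel(2)[OF E_carrier det_E y]
      mult_mat_vec[OF minv(1)[OF E_carrier det_E] d_carrier]
    by simp
  then show ?thesis
    unfolding h_def[symmetric] by (subst u_eq) (simp add: smult_consv)
qed

lemma An_shift_onto_complement:
  assumes v: "v \<in> carrier_vec (n + 1)" and qv: "q \<bullet> v = 0"
  shows "\<exists>x\<in>carrier_vec (n + 1). q \<bullet> x = 0 \<and> An L \<theta> n a *\<^sub>v x - lam \<cdot>\<^sub>v x = v"
proof -
  define h z where "h = headv v" and "z = tailv n v"
  have z: "z \<in> carrier_vec n" by (simp add: z_def)
  have v_eq: "v = consv n h z"
    using consv_headv_tailv[OF v] by (simp add: h_def z_def)
  define y where "y = minv E *\<^sub>v z"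
  have y: "y \<in> carrier_vec n"
    using minv(1)[OF E_carrier det_E] z by (simp add: y_def)
  have Ey: "E *\<^sub>v y = z"
    unfolding y_def by (rule minv_mult_vec_cancel(1)[OF E_carrier det_E z])
  have "(1 / \<delta>) * (h + w \<bullet> z) = 0"
    using qv z unfolding v_eq by (simp add: scalar_prod_consv algebra_simps)
  then have h: "h = lv \<bullet> y"
    using simple w_scalar_prod_E[OF y] Ey comm_scalar_prod[OF lag_values_carrier y]
    by (simp add: add_eq_0_iff)
  define x0 where "x0 = consv n 0 y"
  have "Dmat \<theta> n *\<^sub>v y - 0 \<cdot>\<^sub>v d - lam \<cdot>\<^sub>v y = z"
    using Ey y by (auto simp: shifted_mult_vec[OF Dmat_carrier y] intro!: eq_vecI)
  then have x0: "An L \<theta> n a *\<^sub>v x0 - lam \<cdot>\<^sub>v x0 = v"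
    using h y comm_scalar_prod[OF lag_values_carrier y] unfolding x0_def v_eq
    by (simp add: An_mult_consv_at smult_consv minus_consv)
  \<comment> \<open>correct x0 by a multiple of the eigenvector p to land in the kernel of q\<close>
  define x where "x = x0 - (q \<bullet> x0) \<cdot>\<^sub>v p"
  have x: "x \<in> carrier_vec (n + 1)"
    unfolding x_def x0_def carrier_vec_def by simp
  have "q \<bullet> x = q \<bullet> x0 - q \<bullet> ((q \<bullet> x0) \<cdot>\<^sub>v p)"
    unfolding x_def x0_def
    by (rule scalar_prod_minus_distrib[OF consv_carrier consv_carrier
          smult_carrier_vec[THEN iffD2, OF consv_carrier]])
  then have "q \<bullet> x = 0"
    using q_scalar_prod_p by simp
  moreover have "An L \<theta> n a *\<^sub>v x - lam \<cdot>\<^sub>v x = An L \<theta> n a *\<^sub>v x0 - lam \<cdot>\<^sub>v x0"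
  proof -
    have x0c: "x0 \<in> carrier_vec (n + 1)"
      unfolding x0_def by (rule consv_carrier)
    have pc: "(q \<bullet> x0) \<cdot>\<^sub>v p \<in> carrier_vec (n + 1)"
      by (rule smult_carrier_vec[THEN iffD2, OF consv_carrier])
    have "An L \<theta> n a *\<^sub>v x = An L \<theta> n a *\<^sub>v x0 - (q \<bullet> x0) \<cdot>\<^sub>v (lam \<cdot>\<^sub>v p)"
      unfolding x_def mult_minus_distrib_mat_vec[OF An_carrier x0c pc]
        mult_mat_vec[OF An_carrier consv_carrier] An_mult_p ..
    then show ?thesis
      by (intro eq_vecI) (simp_all add: x_def x0_def algebra_simps)
  qed
  ultimately show ?thesis
    using x x0 by blast
qed

lemma spectral_projection_An:
  "spectral_projection (An L \<theta> n a) lam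
    = mat (n + 1) (n + 1) (\<lambda>(i, j). (q \<bullet> unit_vec (n + 1) j \<cdot>\<^sub>v p) $ i)"
  using An_mult_p q_scalar_prod_p q_scalar_prod_An eigenspace_An An_shift_onto_complement
  by (intro spectral_projection_simple_eigenvalue[OF An_carrier consv_carrier consv_carrier]) blast+

lemma q_scalar_prod_eq:
  assumes v: "v \<in> carrier_vec (n + 1)"
  shows "q \<bullet> v = (1 / \<delta>) * (headv v + cext (L a) (Pop \<theta> n (minv G *\<^sub>v tailv n v)))"
proof -
  define z where "z = tailv n v"
  have z: "z \<in> carrier_vec n" by (simp add: z_def)
  have Gz: "minv G *\<^sub>v z \<in> carrier_vec n"
    using minv(1)[OF G_carrier det_G] z by simp
  \<comment> \<open>F is the transpose of G, so moving the inverse of G across the product turns lv into w\<close>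
  have "(minv G *\<^sub>v z) \<bullet> lv = (transpose_mat F *\<^sub>v (minv G *\<^sub>v z)) \<bullet> w"
    using transpose_vec_mult_scalar[OF F_carrier w_carrier Gz] F_w by simp
  also have "\<dots> = z \<bullet> w"
    unfolding F_eq by (simp add: minv_mult_vec_cancel(1)[OF G_carrier det_G z])
  finally have "cext (L a) (Pop \<theta> n (minv G *\<^sub>v z)) = w \<bullet> z"
    using comm_scalar_prod[OF z w_carrier] by (simp add: cext_Pop[OF bounded_at])
  moreover have "q \<bullet> v = (1 / \<delta>) * headv v + ((1 / \<delta>) \<cdot>\<^sub>v w) \<bullet> z"
    using consv_headv_tailv[OF v] scalar_prod_consv[of z n "1 / \<delta>" "(1 / \<delta>) \<cdot>\<^sub>v w" "headv v"]
    by (simp add: z_def comm_scalar_prod[of q "n + 1" v] v)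
  ultimately show ?thesis
    using w_carrier z by (simp add: z_def algebra_simps)
qed

lemma q_scalar_prod_An'_p:
  assumes "functional_differentiable_at L a"
  shows "q \<bullet> (An' L \<theta> n a *\<^sub>v p) = - (D2Delta L \<theta> n lam a / \<delta>)"
proof -
  obtain L' where L': "bounded_linear_functional L'"
    and deriv: "\<And>g. contX g \<Longrightarrow> ((\<lambda>b. L b g) has_real_derivative L' g) (at a)"
    using functional_differentiable_at_has_real_derivative[OF bounded assms] by blast
  show ?thesis
    using w_carrier
    by (simp add: An'_mult_consv[OF bounded deriv c_carrier] D2Delta_eq[OF deriv L']
        scalar_prod_consv minus_divide_left add_divide_distrib)
qed

end

theorem mainTheorem16:
  fixes L :: "real \<Rightarrow> (real \<Rightarrow> real) \<Rightarrow> real"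
    and \<theta> :: "nat \<Rightarrow> real" and n :: nat and a :: real and lam :: complex
  assumes n1: "n \<ge> 1"
    and mesh0: "\<theta> 0 = 0" and meshdec: "\<forall>i<n. \<theta> (i + 1) < \<theta> i" and meshn: "-1 \<le> \<theta> n"
    and Lbl: "\<forall>b. bounded_linear_functional (L b)"
    and inv: "invertible_mat (Dmat \<theta> n - lam \<cdot>\<^sub>m 1\<^sub>m n)"
    and char: "Deltan L \<theta> n lam a = 0"
    and simple: "D1Delta L \<theta> n lam a \<noteq> 0"
  defines "p \<equiv> consv n 1 (minv (Dmat \<theta> n - lam \<cdot>\<^sub>m 1\<^sub>m n) *\<^sub>v (Dmat \<theta> n *\<^sub>v onevec n))"
    and "q \<equiv> consv n (1 / D1Delta L \<theta> n lam a)
               ((1 / D1Delta L \<theta> n lam a) \<cdot>\<^sub>v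
                 (minv (lam \<cdot>\<^sub>m 1\<^sub>m n - transpose_mat (Dmat \<theta> n))
                   *\<^sub>v vec n (\<lambda>j. cext (L a) (\<lambda>t. complex_of_real (lag \<theta> n (j + 1) t)))))"
  shows "transpose_mat (An L \<theta> n a) *\<^sub>v q = lam \<cdot>\<^sub>v q
    \<and> scalar_prod q p = 1
    \<and> spectral_projection (An L \<theta> n a) lam
        = mat (n + 1) (n + 1) (\<lambda>(i, j).
            ((1 / D1Delta L \<theta> n lam a) *
              (headv (unit_vec (n + 1) j)
               + cext (L a) (Pop \<theta> n (minv (lam \<cdot>\<^sub>m 1\<^sub>m n - Dmat \<theta> n) *\<^sub>v tailv n (unit_vec (n + 1) j))))
             \<cdot>\<^sub>v p) $ i)
    \<and> spectral_projection (An L \<theta> n a) lam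
        = mat (n + 1) (n + 1) (\<lambda>(i, j). (scalar_prod q (unit_vec (n + 1) j) \<cdot>\<^sub>v p) $ i)
    \<and> (functional_differentiable_at L a \<longrightarrow>
         scalar_prod q (An' L \<theta> n a *\<^sub>v p) = - (D2Delta L \<theta> n lam a / D1Delta L \<theta> n lam a))"
proof -
  interpret simple_characteristic_root L \<theta> n a lam
    using Lbl inv char simple by unfold_locales
  have q_eq: "q = consv n (1 / \<delta>) ((1 / \<delta>) \<cdot>\<^sub>v w)"
    by (simp add: q_def lag_values_def)
  have "spectral_projection (An L \<theta> n a) lam
      = mat (n + 1) (n + 1) (\<lambda>(i, j). ((1 / \<delta>) * (headv (unit_vec (n + 1) j)
          + cext (L a) (Pop \<theta> n (minv G *\<^sub>v tailv n (unit_vec (n + 1) j)))) \<cdot>\<^sub>v p) $ i)"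
    unfolding spectral_projection_An p_def by (intro cong_mat) (simp_all add: q_scalar_prod_eq)
  then show ?thesis
    unfolding p_def q_eq
    using transpose_An_mult_q q_scalar_prod_p spectral_projection_An q_scalar_prod_An'_p by simp
qed

end
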